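(* Let $C_1>0$ and $\underline{\Phi}\in\mathbb{R}$. Let $T>0$ and $\mu\in C([0,T],(0,\infty))$ with $\Phi_h(\mu)\neq0$ (here $\Phi_h(\mu)$ is computed with terminal time $T$). Consider: (a) there exist $\lambda_1,\lambda_2\in\mathbb{R}$ with $\mathcal{G}(\mu)=C_1$, $\Phi(z_\mu(T))=\underline{\Phi}$, $\lambda_1 g'(\mu(t))+\lambda_2\Phi_h(\mu)=0$ for all $t\in[0,T]$, and $1+\lambda_1 g(\mu(T))+\lambda_2\Phi_h(\mu)\mu(T)=0$ (the first-order necessary conditions for a stationary point of $(\mu,T)\mapsto T$ subject to $\mathcal{G}(\mu)=C_1$ and $\Phi(z_\mu(T))=\underline{\Phi}$); (b) for a given $C_2>0$, there exist $\lambda_{1,\mathrm{ref}},\lambda_{2,\mathrm{ref}}\in\mathbb{R}$ with $\mathcal{G}(\mu)=C_1$, $\mathcal{I}(\mu)=C_2$, $\lambda_{1,\mathrm{ref}}g'(\mu(t))+\lambda_{2,\mathrm{ref}}=0$ for all $t\in[0,T]$, and $1+\lambda_{1,\mathrm{ref}}g(\mu(T))+\lambda_{2,\mathrm{ref}}\mu(T)=0$ (the first-order necessary conditions for a stationary point of $(\mu,T)\mapsto T$ subject to $\mathcal{G}(\mu)=C_1$ and $\mathcal{I}(\mu)=C_2$). Then: if (a) holds, then (b) holds with $C_2:=\mathcal{I}(\mu)$, which satisfies $\Phi(\hat z(C_2))=\underline{\Phi}$, and with $\lambda_{1,\mathrm{ref}}=\lambda_1$, $\lambda_{2,\mathrm{ref}}=\lambda_2\Phi_h(\mu)$.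 Conversely, if (b) holds for some $C_2>0$ with $\Phi(\hat z(C_2))=\underline{\Phi}$, then (a) holds with $\lambda_1=\lambda_{1,\mathrm{ref}}$, $\lambda_2=\lambda_{2,\mathrm{ref}}/\Phi_h(\mu)$.
   Context: Standing setup: $n,s\ge1$, $p\in\mathbb{R}^s$, $z_0\in\mathbb{R}^n$; $h:\mathbb{R}^n\times\mathbb{R}^s\to\mathbb{R}^n$ is continuously differentiable in its first argument and such that the autonomous initial value problem $\hat z'(\tau)=h(\hat z(\tau),p)$, $\hat z(0)=z_0$ has a unique solution $\hat z$ defined for all $\tau\in\mathbb{R}$. For $T>0$ and $\mu\in C([0,T],\mathbb{R})$, $z_\mu:[0,T]\to\mathbb{R}^n$ denotes the solution of $\dot z(t)=\mu(t)h(z(t),p)$, $z(0)=z_0$. $\Phi:\mathbb{R}^n\to\mathbb{R}$ is continuously differentiable, and $g:\mathbb{R}\to\mathbb{R}$ is continuously differentiable and positive. Define $\mathcal{G}(\mu):=\int_0^T g(\mu(t))\,\mathrm{d}t$, $\mathcal{I}(\mu):=\int_0^T\mu(t)\,\mathrm{d}t$, and $\Phi_h(\mu):=\nabla\Phi(z_\mu(T))\cdot h(z_\mu(T),p)$ (the Lie derivative of $\Phi$ along $h$ at the terminal state). *)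

theory Defs
  imports "HOL-Analysis.Analysis"
begin

definition solves_scaled_ivp ::
  "('v::real_normed_vector \<Rightarrow> 'q \<Rightarrow> 'v) \<Rightarrow> 'q \<Rightarrow> 'v \<Rightarrow> real \<Rightarrow> (real \<Rightarrow> real) \<Rightarrow> (real \<Rightarrow> 'v) \<Rightarrow> bool" where
  "solves_scaled_ivp h p z0 T mu z \<longleftrightarrow>
     z 0 = z0 \<and>
     (\<forall>t\<in>{0..T}. (z has_vector_derivative (mu t *\<^sub>R h (z t) p)) (at t within {0..T}))"

definition solves_autonomous_ivp ::
  "('v::real_normed_vector \<Rightarrow> 'q \<Rightarrow> 'v) \<Rightarrow> 'q \<Rightarrow> 'v \<Rightarrow> (real \<Rightarrow> 'v) \<Rightarrow> bool" where
  "solves_autonomous_ivp h p z0 w \<longleftrightarrow>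
     w 0 = z0 \<and> (\<forall>\<tau>. (w has_vector_derivative h (w \<tau>) p) (at \<tau>))"

definition GG :: "(real \<Rightarrow> real) \<Rightarrow> real \<Rightarrow> (real \<Rightarrow> real) \<Rightarrow> real" where
  "GG g T mu = integral {0..T} (\<lambda>t. g (mu t))"

definition II :: "real \<Rightarrow> (real \<Rightarrow> real) \<Rightarrow> real" where
  "II T mu = integral {0..T} mu"

text \<open>Lie derivative of Phi along h at the terminal state x = z_mu(T):
  grad Phi(x) . h(x,p), i.e. the derivative of Phi at x applied to h(x,p).\<close>
definition Phi_h :: "('v::real_normed_vector \<Rightarrow> real) \<Rightarrow> ('v \<Rightarrow> 'q \<Rightarrow> 'v) \<Rightarrow> 'q \<Rightarrow> 'v \<Rightarrow> real" where
  "Phi_h Phi h p x = frechet_derivative Phi (at x) (h x p)"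

end

theory Submission
  imports Defs
begin

text \<open>Along \<open>z\<^sub>\<mu>\<close> only the clock changes: by the chain rule \<open>t \<mapsto> zhat (\<integral>\<^sub>0\<^sup>t \<mu>)\<close>
  solves \<open>z' = \<mu>(t) h(z,p)\<close>, \<open>z(0) = z\<^sub>0\<close>, and since \<open>h(\<cdot>,p)\<close> is \<open>C\<^sup>1\<close>, hence Lipschitz on
  compact sets, a Gronwall argument shows that this problem has only one solution. Thus
  \<open>z\<^sub>\<mu>(T) = zhat (\<I>(\<mu>))\<close>, so with \<open>C\<^sub>2 = \<I>(\<mu>) > 0\<close> the two terminal constraints on \<open>\<Phi>\<close>
  coincide, and the two systems of multiplier conditions differ only by the rescaling
  \<open>\<lambda>\<^sub>2\<^sub>,\<^sub>r\<^sub>e\<^sub>f = \<lambda>\<^sub>2 \<Phi>\<^sub>h(\<mu>)\<close>, which is invertible because \<open>\<Phi>\<^sub>h(\<mu>) \<noteq> 0\<close>.\<close>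

lemma vanishes_if_derivative_linearly_bounded:
  fixes d d' :: "real \<Rightarrow> 'a::real_inner"
  assumes der: "\<And>t. t \<in> {0..T} \<Longrightarrow> (d has_vector_derivative d' t) (at t within {0..T})"
    and bound: "\<And>t. t \<in> {0..T} \<Longrightarrow> norm (d' t) \<le> c * norm (d t)"
    and "c \<ge> 0" and "d 0 = 0"
    and t: "t \<in> {0..T}"
  shows "d t = 0"
proof -
  txt \<open>The weighted energy \<open>e\<^sup>-\<^sup>2\<^sup>c\<^sup>s |d(s)|\<^sup>2\<close> is non-increasing and vanishes at \<open>0\<close>.\<close>
  define \<phi> where "\<phi> s = exp (- (2 * c * s)) * (d s \<bullet> d s)" for s
  define \<phi>' where "\<phi>' s = exp (- (2 * c * s)) * (-2 * c * (d s \<bullet> d s) + 2 * (d s \<bullet> d' s))" for s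
  have \<phi>_deriv: "(\<phi> has_derivative (\<lambda>x. x * \<phi>' s)) (at s within {0..t})" if s: "s \<in> {0..t}" for s
  proof -
    have "(d has_vector_derivative d' s) (at s within {0..t})"
      using der[of s] s t by (auto intro: has_vector_derivative_within_subset)
    hence dd: "(d has_derivative (\<lambda>x. x *\<^sub>R d' s)) (at s within {0..t})"
      by (simp add: has_vector_derivative_def)
    have e: "((\<lambda>s. exp (- (2 * c * s))) has_derivative
        (\<lambda>x. x * (exp (- (2 * c * s)) * (- 2 * c)))) (at s within {0..t})"
      by (auto intro!: derivative_eq_intros simp: algebra_simps)
    show ?thesis unfolding \<phi>_def \<phi>'_def
      by (rule has_derivative_mult[OF e has_derivative_inner[OF dd dd], THEN has_derivative_eq_rhs])
        (auto simp: fun_eq_iff algebra_simps inner_commute)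
  qed
  have "0 \<le> t" using t by simp
  from mvt_very_simple[OF this, of \<phi> "\<lambda>s x. x * \<phi>' s"] \<phi>_deriv
  obtain x where x: "x \<in> {0..t}" and mvt: "\<phi> t - \<phi> 0 = (t - 0) * \<phi>' x" by auto
  have "x \<in> {0..T}" using x t by auto
  have "d x \<bullet> d' x \<le> norm (d x) * norm (d' x)" by (rule norm_cauchy_schwarz)
  also have "\<dots> \<le> norm (d x) * (c * norm (d x))"
    by (rule mult_left_mono[OF bound[OF \<open>x \<in> {0..T}\<close>]]) simp
  also have "\<dots> = c * (d x \<bullet> d x)"
    by (simp add: power2_norm_eq_inner[symmetric] power2_eq_square)
  finally have "\<phi>' x \<le> 0" unfolding \<phi>'_def by (simp add: mult_le_0_iff)
  hence "\<phi> t \<le> 0" using mvt \<open>d 0 = 0\<close> \<open>0 \<le> t\<close> by (simp add: \<phi>_def mult_nonneg_nonpos)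
  hence "d t \<bullet> d t \<le> 0" unfolding \<phi>_def by (simp add: mult_le_0_iff)
  thus ?thesis by (metis inner_eq_zero_iff inner_ge_zero order_antisym)
qed

lemma lipschitz_on_compact_convex_if_continuous_derivative:
  fixes f :: "'a::euclidean_space \<Rightarrow> 'b::real_normed_vector"
  assumes f': "\<And>x. (f has_derivative blinfun_apply (D x)) (at x)"
    and "continuous_on UNIV D" and "compact K" and "convex K"
  obtains B where "B-lipschitz_on K f"
proof -
  have "bounded (D ` K)"
    using assms(2,3)
    by (metis compact_imp_bounded compact_continuous_image continuous_on_subset subset_UNIV)
  then obtain B where B: "\<forall>y\<in>D ` K. norm y \<le> B" and "B > 0"
    unfolding bounded_pos by blast
  have "norm (f x - f y) \<le> B * norm (x - y)" if "x \<in> K" "y \<in> K" for x y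
    using \<open>convex K\<close> that B
    by (intro differentiable_bound[where f'="\<lambda>x. blinfun_apply (D x)"])
      (auto intro: has_derivative_at_withinI[OF f'] simp: norm_blinfun.rep_eq[symmetric])
  with \<open>B > 0\<close> have "B-lipschitz_on K f"
    by (auto intro!: lipschitz_onI simp: dist_norm)
  thus thesis ..
qed

lemma solves_scaled_ivp_unique:
  fixes h :: "'v::euclidean_space \<Rightarrow> 'q \<Rightarrow> 'v"
  assumes h': "\<And>x. ((\<lambda>y. h y p) has_derivative blinfun_apply (D x)) (at x)"
    and D_cont: "continuous_on UNIV D"
    and mu_cont: "continuous_on {0..T} mu"
    and z: "solves_scaled_ivp h p z0 T mu z"
    and w: "solves_scaled_ivp h p z0 T mu w"
    and t: "t \<in> {0..T}"
  shows "z t = w t"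
proof -
  have z': "(z has_vector_derivative mu t *\<^sub>R h (z t) p) (at t within {0..T})"
    and w': "(w has_vector_derivative mu t *\<^sub>R h (w t) p) (at t within {0..T})"
    if "t \<in> {0..T}" for t
    using z w that unfolding solves_scaled_ivp_def by blast+
  have "continuous_on {0..T} z" "continuous_on {0..T} w"
    using z' w' has_vector_derivative_continuous continuous_on_eq_continuous_within by blast+
  hence "bounded (z ` {0..T} \<union> w ` {0..T})"
    by (simp add: compact_imp_bounded compact_continuous_image)
  then obtain R where R: "\<And>x. x \<in> z ` {0..T} \<union> w ` {0..T} \<Longrightarrow> norm x \<le> R"
    unfolding bounded_iff by blast
  obtain L where L: "L-lipschitz_on (cball 0 R) (\<lambda>y. h y p)"
    using lipschitz_on_compact_convex_if_continuous_derivative[OF h' D_cont compact_cball convex_cball] .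
  have "bounded (mu ` {0..T})"
    using compact_continuous_image[OF mu_cont compact_Icc] by (rule compact_imp_bounded)
  then obtain M where M: "\<And>s. s \<in> {0..T} \<Longrightarrow> \<bar>mu s\<bar> \<le> M"
    unfolding bounded_iff by (metis image_eqI real_norm_def)
  have "z s - w s = 0" if "s \<in> {0..T}" for s
  proof (rule vanishes_if_derivative_linearly_bounded[OF _ _ _ _ that])
    show "((\<lambda>s. z s - w s) has_vector_derivative mu s *\<^sub>R (h (z s) p - h (w s) p))
        (at s within {0..T})" if "s \<in> {0..T}" for s
      unfolding scaleR_diff_right by (intro has_vector_derivative_diff z' w' that)
    show "norm (mu s *\<^sub>R (h (z s) p - h (w s) p)) \<le> (M * L) * norm (z s - w s)"
      if s: "s \<in> {0..T}" for s
    proof -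
      have "norm (h (z s) p - h (w s) p) \<le> L * norm (z s - w s)"
        using lipschitz_on_normD[OF L] R s by auto
      hence "\<bar>mu s\<bar> * norm (h (z s) p - h (w s) p) \<le> M * (L * norm (z s - w s))"
        using M[OF s] lipschitz_on_nonneg[OF L] by (intro mult_mono) auto
      thus ?thesis by (simp add: mult.assoc)
    qed
    show "0 \<le> M * L"
      using M[of 0] t lipschitz_on_nonneg[OF L] by auto
    show "z 0 - w 0 = 0"
      using z w unfolding solves_scaled_ivp_def by simp
  qed
  thus ?thesis using t by simp
qed

lemma solves_scaled_ivp_reparametrize:
  assumes zhat: "solves_autonomous_ivp h p z0 zhat"
    and mu_cont: "continuous_on {0..T} mu"
  shows "solves_scaled_ivp h p z0 T mu (\<lambda>t. zhat (integral {0..t} mu))"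
  unfolding solves_scaled_ivp_def
proof (intro conjI ballI)
  show "zhat (integral {0..0} mu) = z0"
    using zhat unfolding solves_autonomous_ivp_def by simp
  fix t assume t: "t \<in> {0..T}"
  have "(zhat has_vector_derivative h (zhat (integral {0..t} mu)) p) (at (integral {0..t} mu))"
    using zhat unfolding solves_autonomous_ivp_def by blast
  from vector_diff_chain_within[OF integral_has_vector_derivative[OF mu_cont t]
      has_vector_derivative_at_within[OF this]]
  show "((\<lambda>t. zhat (integral {0..t} mu)) has_vector_derivative
      mu t *\<^sub>R h (zhat (integral {0..t} mu)) p) (at t within {0..T})"
    by (simp add: comp_def)
qed

theorem theorem3:
  fixes h :: "real^'n \<Rightarrow> real^'s \<Rightarrow> real^'n"
    and p :: "real^'s" and z0 :: "real^'n"
    and zhat :: "real \<Rightarrow> real^'n"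
    and Phi :: "real^'n \<Rightarrow> real"
    and g :: "real \<Rightarrow> real"
    and C1 Philow T :: real
    and mu :: "real \<Rightarrow> real"
    and zmu :: "real \<Rightarrow> real^'n"
  assumes h_C1: "\<forall>q. \<exists>D :: real^'n \<Rightarrow> (real^'n) \<Rightarrow>\<^sub>L (real^'n).
                     (\<forall>x. ((\<lambda>y. h y q) has_derivative blinfun_apply (D x)) (at x)) \<and> continuous_on UNIV D"
    and zhat_sol: "solves_autonomous_ivp h p z0 zhat"
    and zhat_unique: "\<forall>w. solves_autonomous_ivp h p z0 w \<longrightarrow> w = zhat"
    and Phi_C1: "\<exists>D :: real^'n \<Rightarrow> (real^'n) \<Rightarrow>\<^sub>L real.
                     (\<forall>x. (Phi has_derivative blinfun_apply (D x)) (at x)) \<and> continuous_on UNIV D"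
    and g_diff: "\<forall>x. g differentiable (at x)"
    and g'_cont: "continuous_on UNIV (deriv g)"
    and g_pos: "\<forall>x. g x > 0"
    and C1_pos: "C1 > 0"
    and T_pos: "T > 0"
    and mu_cont: "continuous_on {0..T} mu"
    and mu_pos: "\<forall>t\<in>{0..T}. mu t > 0"
    and zmu_sol: "solves_scaled_ivp h p z0 T mu zmu"
    and Phih_nz: "Phi_h Phi h p (zmu T) \<noteq> 0"
  shows
   "(\<forall>l1 l2.
       GG g T mu = C1 \<and> Phi (zmu T) = Philow \<and>
       (\<forall>t\<in>{0..T}. l1 * deriv g (mu t) + l2 * Phi_h Phi h p (zmu T) = 0) \<and>
       1 + l1 * g (mu T) + l2 * Phi_h Phi h p (zmu T) * mu T = 0
     \<longrightarrow>
       (let C2 = II T mu; l1r = l1; l2r = l2 * Phi_h Phi h p (zmu T) in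
          C2 > 0 \<and> Phi (zhat C2) = Philow \<and>
          GG g T mu = C1 \<and> II T mu = C2 \<and>
          (\<forall>t\<in>{0..T}. l1r * deriv g (mu t) + l2r = 0) \<and>
          1 + l1r * g (mu T) + l2r * mu T = 0))
    \<and>
    (\<forall>C2 l1r l2r.
       C2 > 0 \<and> Phi (zhat C2) = Philow \<and>
       GG g T mu = C1 \<and> II T mu = C2 \<and>
       (\<forall>t\<in>{0..T}. l1r * deriv g (mu t) + l2r = 0) \<and>
       1 + l1r * g (mu T) + l2r * mu T = 0
     \<longrightarrow>
       (let l1 = l1r; l2 = l2r / Phi_h Phi h p (zmu T) in
          GG g T mu = C1 \<and> Phi (zmu T) = Philow \<and>
          (\<forall>t\<in>{0..T}. l1 * deriv g (mu t) + l2 * Phi_h Phi h p (zmu T) = 0) \<and>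
          1 + l1 * g (mu T) + l2 * Phi_h Phi h p (zmu T) * mu T = 0))"
proof -
  obtain D :: "real^'n \<Rightarrow> (real^'n) \<Rightarrow>\<^sub>L (real^'n)" where
    h': "\<And>x. ((\<lambda>y. h y p) has_derivative blinfun_apply (D x)) (at x)" and "continuous_on UNIV D"
    using h_C1 by blast
  have "zmu T = zhat (II T mu)"
    unfolding II_def
    using solves_scaled_ivp_unique[OF h' \<open>continuous_on UNIV D\<close> mu_cont zmu_sol
        solves_scaled_ivp_reparametrize[OF zhat_sol mu_cont]] T_pos
    by simp
  moreover have "II T mu > 0"
    using integral_less_real[of 0 T "\<lambda>_. 0" mu] mu_cont mu_pos T_pos
    unfolding II_def by auto
  ultimately show ?thesis
    unfolding Let_def using Phih_nz by (auto simp: algebra_simps)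
qed

end
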